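(* Fix $N\ge1$, $B>0$, $a_{\max}>0$, and for each $n$: $a_n\ge0$, $\zeta_n\in(0,1]$, $\beta_n\ge0$, integers $\tau_n\ge1$, $D_n\ge1$. Call a pair of vectors $(\mathbf p,\mathbf q)\in[0,1]^N\times[0,1]^N$ admissible if $0\le q_n<p_n\le1$ and $q_n\le a_n/a_{\max}\le p_n$ for all $n$. For admissible $(\mathbf p,\mathbf q)$ let $\phi_I^*(\mathbf p,\mathbf q)=\min_{\lambda\ge0}g_I(\lambda;\mathbf p,\mathbf q)$, where $g_I$ is defined below. Then: (i) for fixed $\mathbf p$, if $(\mathbf p,\mathbf q)$ and $(\mathbf p,\mathbf q')$ are admissible and $\mathbf q\le\mathbf q'$ componentwise, then $\phi_I^*(\mathbf p,\mathbf q)\ge\phi_I^*(\mathbf p,\mathbf q')$; (ii) if $(\mathbf p,\mathbf 0)$ and $(\mathbf p',\mathbf 0)$ are admissible and $\mathbf p\le\mathbf p'$ componentwise, then $\phi_I^*(\mathbf p,\mathbf 0)\le\phi_I^*(\mathbf p',\mathbf 0)$.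
   Context: Put $\tilde a_n=\frac{a_n-a_{\max}q_n}{p_n-q_n}$. For $\lambda\ge0$ and $n$ with $\zeta_n\beta_n>\lambda$, let $c_n(\lambda)=\frac{\lambda}{(\zeta_n\beta_n-\lambda)(1-\zeta_n)^{\tau_n}+\lambda}$ and $v_n(\lambda)=p_n\frac{1-(1-\zeta_n)^{\tau_n}}{\zeta_n}(\zeta_n\beta_n-\lambda)$ if $p_n\le c_n(\lambda)$, and $v_n(\lambda)=-(1-p_n)\frac{1-(1-\zeta_n)^{D_n}}{\zeta_n}\lambda+p_n\frac{1-(1-\zeta_n)^{\tau_n+D_n}}{\zeta_n}(\zeta_n\beta_n-\lambda)$ if $p_n>c_n(\lambda)$. Define $g_I(\lambda;\mathbf p,\mathbf q)=\lambda B+\sum_{n:\ \zeta_n\beta_n>\lambda}\big[\tilde a_n v_n(\lambda)+(a_{\max}-\tilde a_n)q_n\frac{1-(1-\zeta_n)^{\tau_n}}{\zeta_n}(\zeta_n\beta_n-\lambda)\big]$. This is the Lagrange dual function of the weighted timely-throughput problem with static channels, binary resource levels and imperfect prediction with true-positive rates $\mathbf p$ and false-negative rates $\mathbf q$; $\phi_I^*$ is the optimal weighted timely-throughput. *)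

theory Defs
  imports Complex_Main
begin

definition atil :: "real \<Rightarrow> real \<Rightarrow> real \<Rightarrow> real \<Rightarrow> real" where
  "atil an amax pn qn = (an - amax * qn) / (pn - qn)"

definition cthr :: "real \<Rightarrow> real \<Rightarrow> nat \<Rightarrow> real \<Rightarrow> real" where
  "cthr z b t l = l / ((z * b - l) * (1 - z) ^ t + l)"

definition vval :: "real \<Rightarrow> real \<Rightarrow> nat \<Rightarrow> nat \<Rightarrow> real \<Rightarrow> real \<Rightarrow> real" where
  "vval z b t d pn l =
     (if pn \<le> cthr z b t l
      then pn * ((1 - (1 - z) ^ t) / z) * (z * b - l)
      else - (1 - pn) * ((1 - (1 - z) ^ d) / z) * l
           + pn * ((1 - (1 - z) ^ (t + d)) / z) * (z * b - l))"

definition gI :: "nat \<Rightarrow> real \<Rightarrow> real \<Rightarrow> (nat \<Rightarrow> real) \<Rightarrow> (nat \<Rightarrow> real) \<Rightarrow> (nat \<Rightarrow> real)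
    \<Rightarrow> (nat \<Rightarrow> nat) \<Rightarrow> (nat \<Rightarrow> nat) \<Rightarrow> (nat \<Rightarrow> real) \<Rightarrow> (nat \<Rightarrow> real) \<Rightarrow> real \<Rightarrow> real" where
  "gI N B amax a zeta beta tau D p q l =
     l * B + (\<Sum>n\<in>{n. n < N \<and> zeta n * beta n > l}.
        atil (a n) amax (p n) (q n) * vval (zeta n) (beta n) (tau n) (D n) (p n) l
        + (amax - atil (a n) amax (p n) (q n)) * q n
            * ((1 - (1 - zeta n) ^ tau n) / zeta n) * (zeta n * beta n - l))"

definition phiI :: "nat \<Rightarrow> real \<Rightarrow> real \<Rightarrow> (nat \<Rightarrow> real) \<Rightarrow> (nat \<Rightarrow> real) \<Rightarrow> (nat \<Rightarrow> real)
    \<Rightarrow> (nat \<Rightarrow> nat) \<Rightarrow> (nat \<Rightarrow> nat) \<Rightarrow> (nat \<Rightarrow> real) \<Rightarrow> (nat \<Rightarrow> real) \<Rightarrow> real" where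
  "phiI N B amax a zeta beta tau D p q = (INF l\<in>{0..}. gI N B amax a zeta beta tau D p q l)"

definition admissible :: "nat \<Rightarrow> real \<Rightarrow> (nat \<Rightarrow> real) \<Rightarrow> (nat \<Rightarrow> real) \<Rightarrow> (nat \<Rightarrow> real) \<Rightarrow> bool" where
  "admissible N amax a p q \<longleftrightarrow>
     (\<forall>n<N. 0 \<le> q n \<and> q n < p n \<and> p n \<le> 1 \<and> q n \<le> a n / amax \<and> a n / amax \<le> p n)"

end

theory Submission
  imports Defs
begin

text \<open>Under admissibility both weights \<open>atil\<close> and \<open>amax - atil\<close> are nonnegative and \<open>v_n\<close>
  dominates its short-horizon branch, so every summand of the dual function is nonnegative and
  the infimum defining \<open>\<phi>_I\<close> is finite; it then suffices to compare the dual functions pointwise.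
  Writing \<open>atil\<close> out, the \<open>n\<close>-th summand is an affine function of \<open>1/(p_n - q_n)\<close>
  with nonpositive coefficient, hence nonincreasing in \<open>q_n\<close>. For \<open>q = 0\<close> the summand is
  \<open>a_n v_n/p_n\<close>, the maximum of two expressions that are nondecreasing in \<open>p_n\<close>.\<close>

lemma geometric_tail_nonneg:
  fixes z :: real
  assumes "0 < z" "z \<le> 1"
  shows "0 \<le> (1 - (1 - z) ^ t) / z"
  using assms by (auto intro!: divide_nonneg_pos power_le_one)

lemma vval_eq_max:
  fixes z b l p :: real and t d :: nat
  assumes z: "0 < z" "z \<le> 1" and l: "0 \<le> l" "l < z * b"
  shows "vval z b t d p l = max (p * ((1 - (1 - z) ^ t) / z) * (z * b - l))
     (- (1 - p) * ((1 - (1 - z) ^ d) / z) * l + p * ((1 - (1 - z) ^ (t + d)) / z) * (z * b - l))"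
    (is "_ = max ?short ?long")
proof -
  define den where "den = (z * b - l) * (1 - z) ^ t + l"
  define KD where "KD = (1 - (1 - z) ^ d) / z"
  have long_eq: "?long = ?short + KD * (p * den - l)"
    unfolding KD_def den_def using z by (simp add: power_add field_simps)
  have "0 \<le> KD"
    unfolding KD_def using z by (rule geometric_tail_nonneg)
  have den_ge: "l \<le> den" "0 \<le> (z * b - l) * (1 - z) ^ t"
    unfolding den_def using z l by auto
  show ?thesis
  proof (cases "den = 0")
    case True
    then have "?long = ?short"
      using den_ge l long_eq by simp
    then show ?thesis unfolding vval_def by simp
  next
    case False
    then have "0 < den" using den_ge l by simp
    then have threshold: "p \<le> cthr z b t l \<longleftrightarrow> p * den \<le> l"
      unfolding cthr_def den_def[symmetric] by (simp add: pos_le_divide_eq)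
    show ?thesis
    proof (cases "p * den \<le> l")
      case True
      then have "KD * (p * den - l) \<le> 0"
        using \<open>0 \<le> KD\<close> by (simp add: mult_nonneg_nonpos)
      then show ?thesis
        using True threshold long_eq unfolding vval_def by simp
    next
      case False
      then have "0 \<le> KD * (p * den - l)"
        using \<open>0 \<le> KD\<close> by simp
      then show ?thesis
        using False threshold long_eq unfolding vval_def by simp
    qed
  qed
qed

definition dual_summand :: "real \<Rightarrow> real \<Rightarrow> real \<Rightarrow> real \<Rightarrow> nat \<Rightarrow> nat \<Rightarrow> real \<Rightarrow> real \<Rightarrow> real \<Rightarrow> real" where
  "dual_summand an amax z b t d pn qn l =
     atil an amax pn qn * vval z b t d pn l
     + (amax - atil an amax pn qn) * qn * ((1 - (1 - z) ^ t) / z) * (z * b - l)"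

lemma gI_eq_sum_dual_summand:
  "gI N B amax a zeta beta tau D p q l = l * B + (\<Sum>n\<in>{n. n < N \<and> zeta n * beta n > l}.
     dual_summand (a n) amax (zeta n) (beta n) (tau n) (D n) (p n) (q n) l)"
  unfolding gI_def dual_summand_def ..

lemma atil_weighted_sum_eq:
  fixes A M p x V W :: real
  assumes "x < p"
  shows "atil A M p x * V + (M - atil A M p x) * x * W
    = M * V + (A - M * p) * W + (A - M * p) * (V - p * W) / (p - x)"
proof -
  have "p - x \<noteq> 0" using assms by simp
  then show ?thesis
    unfolding atil_def by (simp add: divide_simps) (simp add: algebra_simps)
qed

lemma dual_summand_nonneg:
  fixes amax an z b pn qn l :: real
  assumes z: "0 < z" "z \<le> 1" and l: "0 \<le> l" "l < z * b"
    and q: "0 \<le> qn" "qn < pn" and a: "amax * qn \<le> an" "an \<le> amax * pn"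
  shows "0 \<le> dual_summand an amax z b t d pn qn l"
proof -
  have "0 \<le> atil an amax pn qn"
    unfolding atil_def using q a by simp
  moreover have "amax - atil an amax pn qn = (amax * pn - an) / (pn - qn)"
    unfolding atil_def using q by (simp add: field_simps)
  then have "0 \<le> amax - atil an amax pn qn"
    using q a by simp
  moreover have "0 \<le> pn * ((1 - (1 - z) ^ t) / z) * (z * b - l)"
    using geometric_tail_nonneg[OF z, of t] q l by (intro mult_nonneg_nonneg) auto
  then have "0 \<le> vval z b t d pn l"
    unfolding vval_eq_max[OF z l] by linarith
  ultimately show ?thesis
    unfolding dual_summand_def using geometric_tail_nonneg[OF z, of t] q l
    by (intro add_nonneg_nonneg mult_nonneg_nonneg) auto
qed

lemma dual_summand_antimono_q:
  fixes amax an z b pn qn qn' l :: real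
  assumes z: "0 < z" "z \<le> 1" and l: "0 \<le> l" "l < z * b"
    and q: "qn \<le> qn'" "qn' < pn" and a: "an \<le> amax * pn"
  shows "dual_summand an amax z b t d pn qn' l \<le> dual_summand an amax z b t d pn qn l"
proof -
  define V where "V = vval z b t d pn l"
  define W where "W = (1 - (1 - z) ^ t) / z * (z * b - l)"
  have "pn * W \<le> V"
    unfolding V_def W_def vval_eq_max[OF z l] by simp
  then have "(an - amax * pn) * (V - pn * W) \<le> 0"
    using a by (simp add: mult_nonpos_nonneg)
  then have "(an - amax * pn) * (V - pn * W) / (pn - qn')
      \<le> (an - amax * pn) * (V - pn * W) / (pn - qn)"
    using q by (intro divide_left_mono_neg) auto
  then show ?thesis
    unfolding dual_summand_def V_def[symmetric] mult.assoc[of _ "(1 - (1 - z) ^ t) / z"] W_def[symmetric]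
    using atil_weighted_sum_eq[of qn pn an amax V W] atil_weighted_sum_eq[of qn' pn an amax V W] q
    by (simp add: mult.assoc)
qed

lemma vval_div_eq_max:
  fixes z b l p :: real and t d :: nat
  assumes z: "0 < z" "z \<le> 1" and l: "0 \<le> l" "l < z * b" and "0 < p"
  shows "vval z b t d p l / p = max (((1 - (1 - z) ^ t) / z) * (z * b - l))
     (- (1 / p - 1) * ((1 - (1 - z) ^ d) / z) * l + ((1 - (1 - z) ^ (t + d)) / z) * (z * b - l))"
proof -
  define KT KD KTD where "KT = (1 - (1 - z) ^ t) / z" and "KD = (1 - (1 - z) ^ d) / z"
    and "KTD = (1 - (1 - z) ^ (t + d)) / z"
  have "max u v / p = max (u / p) (v / p)" for u v
    using \<open>0 < p\<close> by (auto simp: max_def divide_right_mono divide_le_cancel)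
  moreover have "p * KT * (z * b - l) / p = KT * (z * b - l)"
    using \<open>0 < p\<close> by simp
  moreover have "(- (1 - p) * KD * l + p * KTD * (z * b - l)) / p = - (1 / p - 1) * KD * l + KTD * (z * b - l)"
    using \<open>0 < p\<close> by (simp add: field_simps)
  ultimately show ?thesis
    unfolding vval_eq_max[OF z l] KT_def KD_def KTD_def by simp
qed

lemma dual_summand_mono_p:
  fixes amax an z b pn pn' l :: real
  assumes z: "0 < z" "z \<le> 1" and l: "0 \<le> l" "l < z * b"
    and p: "0 < pn" "pn \<le> pn'" and "0 \<le> an"
  shows "dual_summand an amax z b t d pn 0 l \<le> dual_summand an amax z b t d pn' 0 l"
proof -
  have summand_eq: "dual_summand an amax z b t d x 0 l = an * (vval z b t d x l / x)" for x
    unfolding dual_summand_def atil_def by simp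
  have "1 / pn' - 1 \<le> 1 / pn - 1"
    using p by (simp add: frac_le)
  then have "(1 / pn' - 1) * ((1 - (1 - z) ^ d) / z * l)
      \<le> (1 / pn - 1) * ((1 - (1 - z) ^ d) / z * l)"
    using geometric_tail_nonneg[OF z, of d] l by (intro mult_right_mono mult_nonneg_nonneg) auto
  then have "- (1 / pn - 1) * ((1 - (1 - z) ^ d) / z) * l
      \<le> - (1 / pn' - 1) * ((1 - (1 - z) ^ d) / z) * l"
    by (simp only: mult.assoc mult_minus_left neg_le_iff_le)
  then have "vval z b t d pn l / pn \<le> vval z b t d pn' l / pn'"
    unfolding vval_div_eq_max[OF z l p(1)] vval_div_eq_max[OF z l order.strict_trans2[OF p]]
    by simp
  then show ?thesis
    unfolding summand_eq using \<open>0 \<le> an\<close> by (rule mult_left_mono)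
qed

lemma gI_nonneg:
  assumes "0 \<le> B" "0 < amax" "admissible N amax a p q"
    and "\<And>n. n < N \<Longrightarrow> 0 < zeta n \<and> zeta n \<le> 1" and "0 \<le> l"
  shows "0 \<le> gI N B amax a zeta beta tau D p q l"
proof -
  have "0 \<le> dual_summand (a n) amax (zeta n) (beta n) (tau n) (D n) (p n) (q n) l"
    if "n < N" "l < zeta n * beta n" for n
  proof (rule dual_summand_nonneg)
    have "q n \<le> a n / amax" "a n / amax \<le> p n" "0 \<le> q n" "q n < p n"
      using assms(3) \<open>n < N\<close> unfolding admissible_def by auto
    then show "amax * q n \<le> a n" "a n \<le> amax * p n" "0 \<le> q n" "q n < p n"
      using \<open>0 < amax\<close> by (simp_all add: pos_le_divide_eq pos_divide_le_eq mult.commute)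
  qed (use assms that in auto)
  then show ?thesis
    unfolding gI_eq_sum_dual_summand using assms(1,5) by (auto intro!: add_nonneg_nonneg sum_nonneg)
qed

lemma phiI_mono_pointwise:
  assumes "0 \<le> B" "0 < amax" "admissible N amax a p q"
    and "\<And>n. n < N \<Longrightarrow> 0 < zeta n \<and> zeta n \<le> 1"
    and "\<And>l. 0 \<le> l \<Longrightarrow> gI N B amax a zeta beta tau D p q l \<le> gI N B amax a zeta beta tau D p' q' l"
  shows "phiI N B amax a zeta beta tau D p q \<le> phiI N B amax a zeta beta tau D p' q'"
  unfolding phiI_def
proof (rule cINF_mono)
  show "bdd_below (gI N B amax a zeta beta tau D p q ` {0..})"
    by (rule bdd_belowI2[where m = 0], rule gI_nonneg) (use assms in auto)
qed (use assms(5) in auto)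

lemma gI_mono_summands:
  assumes "\<And>n. n < N \<Longrightarrow> l < zeta n * beta n \<Longrightarrow>
      dual_summand (a n) amax (zeta n) (beta n) (tau n) (D n) (p n) (q n) l
      \<le> dual_summand (a n) amax (zeta n) (beta n) (tau n) (D n) (p' n) (q' n) l"
  shows "gI N B amax a zeta beta tau D p q l \<le> gI N B amax a zeta beta tau D p' q' l"
  unfolding gI_eq_sum_dual_summand using assms by (auto intro!: sum_mono)

lemma phiI_antimono_q:
  assumes "0 \<le> B" "0 < amax"
    and adm: "admissible N amax a p q" "admissible N amax a p q'" and q: "\<forall>n<N. q n \<le> q' n"
    and zeta: "\<And>n. n < N \<Longrightarrow> 0 < zeta n \<and> zeta n \<le> 1"
  shows "phiI N B amax a zeta beta tau D p q' \<le> phiI N B amax a zeta beta tau D p q"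
proof (rule phiI_mono_pointwise[OF assms(1,2) adm(2)], fact zeta, rule gI_mono_summands)
  fix l n assume l: "0 \<le> l" and n: "n < N" "l < zeta n * beta n"
  have z: "0 < zeta n" "zeta n \<le> 1"
    using zeta[OF n(1)] by auto
  have "q' n < p n" "a n \<le> amax * p n"
    using adm n(1) \<open>0 < amax\<close> by (auto simp: admissible_def pos_divide_le_eq mult.commute)
  with q n(1) show "dual_summand (a n) amax (zeta n) (beta n) (tau n) (D n) (p n) (q' n) l
      \<le> dual_summand (a n) amax (zeta n) (beta n) (tau n) (D n) (p n) (q n) l"
    by (intro dual_summand_antimono_q[OF z l n(2)]) auto
qed

lemma phiI_mono_p:
  assumes "0 \<le> B" "0 < amax"
    and adm: "admissible N amax a p (\<lambda>_. 0)" "admissible N amax a p' (\<lambda>_. 0)"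
    and p: "\<forall>n<N. p n \<le> p' n"
    and zeta: "\<And>n. n < N \<Longrightarrow> 0 < zeta n \<and> zeta n \<le> 1"
    and a: "\<And>n. n < N \<Longrightarrow> 0 \<le> a n"
  shows "phiI N B amax a zeta beta tau D p (\<lambda>_. 0) \<le> phiI N B amax a zeta beta tau D p' (\<lambda>_. 0)"
proof (rule phiI_mono_pointwise[OF assms(1,2) adm(1)], fact zeta, rule gI_mono_summands)
  fix l n assume l: "0 \<le> l" and n: "n < N" "l < zeta n * beta n"
  have z: "0 < zeta n" "zeta n \<le> 1"
    using zeta[OF n(1)] by auto
  have "0 < p n"
    using adm(1) n(1) by (auto simp: admissible_def)
  with p n(1) a[OF n(1)]
  show "dual_summand (a n) amax (zeta n) (beta n) (tau n) (D n) (p n) 0 l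
      \<le> dual_summand (a n) amax (zeta n) (beta n) (tau n) (D n) (p' n) 0 l"
    by (intro dual_summand_mono_p[OF z l n(2)]) auto
qed

theorem theorem5:
  fixes N :: nat and B amax :: real and a zeta beta :: "nat \<Rightarrow> real" and tau D :: "nat \<Rightarrow> nat"
  assumes "N \<ge> 1" and "B > 0" and "amax > 0"
    and "\<And>n. n < N \<Longrightarrow> a n \<ge> 0"
    and "\<And>n. n < N \<Longrightarrow> 0 < zeta n \<and> zeta n \<le> 1"
    and "\<And>n. n < N \<Longrightarrow> beta n \<ge> 0"
    and "\<And>n. n < N \<Longrightarrow> tau n \<ge> 1"
    and "\<And>n. n < N \<Longrightarrow> D n \<ge> 1"
  shows "(\<forall>p q q'. admissible N amax a p q \<and> admissible N amax a p q' \<and> (\<forall>n<N. q n \<le> q' n)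
            \<longrightarrow> phiI N B amax a zeta beta tau D p q \<ge> phiI N B amax a zeta beta tau D p q')
       \<and> (\<forall>p p'. admissible N amax a p (\<lambda>_. 0) \<and> admissible N amax a p' (\<lambda>_. 0) \<and> (\<forall>n<N. p n \<le> p' n)
            \<longrightarrow> phiI N B amax a zeta beta tau D p (\<lambda>_. 0) \<le> phiI N B amax a zeta beta tau D p' (\<lambda>_. 0))"
proof (intro conjI allI impI; elim conjE)
  fix p q q'
  assume "admissible N amax a p q" "admissible N amax a p q'" "\<forall>n<N. q n \<le> q' n"
  then show "phiI N B amax a zeta beta tau D p q' \<le> phiI N B amax a zeta beta tau D p q"
    using \<open>B > 0\<close> \<open>amax > 0\<close> assms(5) by (intro phiI_antimono_q) simp_all
next
  fix p p'
  assume "admissible N amax a p (\<lambda>_. 0)" "admissible N amax a p' (\<lambda>_. 0)" "\<forall>n<N. p n \<le> p' n"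
  then show "phiI N B amax a zeta beta tau D p (\<lambda>_. 0) \<le> phiI N B amax a zeta beta tau D p' (\<lambda>_. 0)"
    using \<open>B > 0\<close> \<open>amax > 0\<close> assms(4,5) by (intro phiI_mono_p) simp_all
qed

end
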